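(* Assume $\kappa=\kappa^{<\kappa}$ and let $x\in S_\kappa$, $X=S_\kappa\setminus\{x\}$. If $V$ and $W$ are disjoint open subsets of $X$ each of $X$-type less than $\kappa$, then there is a clopen subset $A$ of $X$ with $V\subseteq A$ and $W\cap A=\emptyset$.
   Context: A space is zero-dimensional if it has a base of clopen sets. For a zero-dimensional space $X$ and an open $U\subseteq X$, the ($X$-)type $\tau(U)$ is the least cardinal $\tau$ such that $U$ is a union of $\tau$ many clopen subsets of $X$. A zero-dimensional space is an $F_\kappa$-space if every open subset of type less than $\kappa$ is $C^*$-embedded (every bounded continuous real-valued function on it extends continuously to the whole space). A space is a $G_\kappa$-space if every non-empty intersection of fewer than $\kappa$ open sets has non-empty interior. A $\kappa$-Parovičenko space is a compact Hausdorff zero-dimensional $F_\kappa$- and $G_\kappa$-space without isolated points (no weight restriction is imposed). If $\kappa=\kappa^{<\kappa}$ there is, up to homeomorphism, a unique $\kappa$-Parovičenko space of weight $\kappa$; it is denoted $S_\kappa$. *)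

theory Defs
  imports "HOL-Analysis.Analysis"
begin

unbundle cardinal_syntax

definition clopenin :: "'a topology \<Rightarrow> 'a set \<Rightarrow> bool" where
  "clopenin X C \<longleftrightarrow> openin X C \<and> closedin X C"

definition is_base :: "'a topology \<Rightarrow> 'a set set \<Rightarrow> bool" where
  "is_base X B \<longleftrightarrow> (\<forall>b\<in>B. openin X b) \<and> (\<forall>U. openin X U \<longrightarrow> (\<exists>C\<subseteq>B. \<Union>C = U))"

definition has_weight :: "'a topology \<Rightarrow> 'k set \<Rightarrow> bool" where
  "has_weight X K \<longleftrightarrow> (\<exists>B. is_base X B \<and> (card_of (B)) =o (card_of (K))) \<and> (\<forall>B. is_base X B \<longrightarrow> (card_of (K)) \<le>o (card_of (B)))"

definition zero_dim :: "'a topology \<Rightarrow> bool" where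
  "zero_dim X \<longleftrightarrow> (\<exists>B. is_base X B \<and> (\<forall>b\<in>B. clopenin X b))"

definition type_less :: "'a topology \<Rightarrow> 'k set \<Rightarrow> 'a set \<Rightarrow> bool" where
  "type_less X K U \<longleftrightarrow> (\<exists>F. (\<forall>C\<in>F. clopenin X C) \<and> \<Union>F = U \<and> (card_of (F)) <o (card_of (K)))"

definition C_star_embedded :: "'a topology \<Rightarrow> 'a set \<Rightarrow> bool" where
  "C_star_embedded X U \<longleftrightarrow>
     (\<forall>f. continuous_map (subtopology X U) euclideanreal f \<and> bounded (f ` U) \<longrightarrow>
        (\<exists>g. continuous_map X euclideanreal g \<and> (\<forall>y\<in>U. g y = f y)))"

definition F_kappa_space :: "'a topology \<Rightarrow> 'k set \<Rightarrow> bool" where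
  "F_kappa_space X K \<longleftrightarrow> zero_dim X \<and>
     (\<forall>U. openin X U \<and> type_less X K U \<longrightarrow> C_star_embedded X U)"

definition G_kappa_space :: "'a topology \<Rightarrow> 'k set \<Rightarrow> bool" where
  "G_kappa_space X K \<longleftrightarrow>
     (\<forall>F. (\<forall>U\<in>F. openin X U) \<and> (card_of (F)) <o (card_of (K)) \<and> topspace X \<inter> \<Inter>F \<noteq> {} \<longrightarrow>
        X interior_of (topspace X \<inter> \<Inter>F) \<noteq> {})"

definition kappa_Parovicenko :: "'a topology \<Rightarrow> 'k set \<Rightarrow> bool" where
  "kappa_Parovicenko X K \<longleftrightarrow> compact_space X \<and> Hausdorff_space X \<and> zero_dim X \<and>
     F_kappa_space X K \<and> G_kappa_space X K \<and> (\<forall>x\<in>topspace X. \<not> openin X {x})"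

definition kappa_eq_kappa_less_kappa :: "'k set \<Rightarrow> bool" where
  "kappa_eq_kappa_less_kappa K \<longleftrightarrow> (\<forall>L::'k set. (card_of (L)) <o (card_of (K)) \<longrightarrow> (card_of (Func L K)) \<le>o (card_of (K)))"

end

theory Submission imports Defs begin

text \<open>Since \<open>S\<close> has weight \<open>\<kappa>\<close> and is zero-dimensional, \<open>X\<close> is the union of \<open>\<kappa>\<close> many clopen
  subsets \<open>M\<^sub>k\<close> of \<open>S\<close>. The set \<open>A\<close> is built by transfinite recursion along \<open>\<kappa>\<close>, keeping every
  trace \<open>A \<inter> M\<^sub>j\<close> clopen in \<open>S\<close>. At stage \<open>k\<close> only fewer than \<open>\<kappa>\<close> clopen pieces have been used, so
  the part of \<open>A\<close> built so far together with \<open>V \<inter> M\<^sub>k\<close>, and its complement together with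
  \<open>W \<inter> M\<^sub>k\<close>, are disjoint open sets of type less than \<open>\<kappa>\<close>. Their union is \<open>C\<^sup>*\<close>-embedded, so
  the function that is \<open>0\<close> on the first and \<open>1\<close> on the second extends to \<open>S\<close>, and by compactness
  its zero set and its one set are separated by a clopen subset of \<open>S\<close>.\<close>

lemma clopenin_Int: "clopenin S A \<Longrightarrow> clopenin S B \<Longrightarrow> clopenin S (A \<inter> B)"
  by (simp add: clopenin_def openin_Int closedin_Int)

lemma clopenin_diff: "clopenin S A \<Longrightarrow> clopenin S B \<Longrightarrow> clopenin S (A - B)"
  by (simp add: clopenin_def openin_diff closedin_diff)

lemma clopenin_Int_subtopology:
  assumes "clopenin (subtopology S Y) C" "clopenin S M" "M \<subseteq> Y"
  shows "clopenin S (C \<inter> M)"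
proof -
  obtain U F where UF: "openin S U" "C = U \<inter> Y" "closedin S F" "C = F \<inter> Y"
    using assms(1) unfolding clopenin_def openin_subtopology closedin_subtopology by blast
  have "C \<inter> M = U \<inter> M"
    using UF(2) assms(3) by blast
  then have "openin S (C \<inter> M)"
    using UF(1) assms(2) unfolding clopenin_def by (simp add: openin_Int)
  moreover have "C \<inter> M = F \<inter> M"
    using UF(4) assms(3) by blast
  then have "closedin S (C \<inter> M)"
    using UF(3) assms(2) unfolding clopenin_def by (simp add: closedin_Int)
  ultimately show ?thesis
    unfolding clopenin_def by blast
qed

lemma clopenin_subtopology_from_cover:
  assumes "openin S Y" "(\<Union>k\<in>K. M k) = Y" "\<And>k. clopenin S (M k)"
    and "A \<subseteq> Y" "\<And>k. k \<in> K \<Longrightarrow> clopenin S (A \<inter> M k)"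
  shows "clopenin (subtopology S Y) A"
proof -
  have "A = (\<Union>k\<in>K. A \<inter> M k)" "Y - A = (\<Union>k\<in>K. M k - A \<inter> M k)"
    using assms(2,4) by blast+
  moreover have "openin S (\<Union>k\<in>K. A \<inter> M k)"
    by (rule openin_Union) (use assms(5) in \<open>auto simp: clopenin_def\<close>)
  moreover have "openin S (\<Union>k\<in>K. M k - A \<inter> M k)"
    by (rule openin_Union) (use assms(3,5) in \<open>auto simp: clopenin_def intro!: openin_diff\<close>)
  ultimately have "openin S A" "openin S (Y - A)"
    by (simp_all only:)
  moreover have "topspace (subtopology S Y) = Y"
    using openin_subset[OF assms(1)] by auto
  ultimately show ?thesis
    using assms(4) openin_open_subtopology[OF assms(1)] unfolding clopenin_def closedin_def by auto
qed

lemma compact_zero_dim_separation_clopen: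
  assumes "compact_space S" "zero_dim S" "closedin S F" "closedin S G" "F \<inter> G = {}"
  shows "\<exists>B. clopenin S B \<and> F \<subseteq> B \<and> B \<inter> G = {}"
proof -
  obtain B0 where B0: "is_base S B0" "\<And>b. b \<in> B0 \<Longrightarrow> clopenin S b"
    using assms(2) unfolding zero_dim_def by blast
  let ?U = "{b \<in> B0. b \<inter> G = {}}"
  have "openin S (topspace S - G)"
    using assms(4) by (simp add: closedin_def)
  then obtain C where C: "C \<subseteq> B0" "\<Union>C = topspace S - G"
    using B0(1) unfolding is_base_def by meson
  have "C \<subseteq> ?U"
    using C by blast
  moreover have "F \<subseteq> \<Union>C"
    using C(2) closedin_subset[OF assms(3)] assms(5) by blast
  ultimately have "F \<subseteq> \<Union>?U"
    by blast
  moreover have "compactin S F"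
    using closedin_compact_space assms(1,3) by blast
  moreover have "\<forall>b\<in>?U. openin S b"
    using B0(2) unfolding clopenin_def by blast
  ultimately obtain F' where F': "finite F'" "F' \<subseteq> ?U" "F \<subseteq> \<Union>F'"
    unfolding compactin_def by meson
  have "clopenin S (\<Union>F')"
    using F'(1,2) B0(2) unfolding clopenin_def by (auto intro: closedin_Union)
  then show ?thesis
    using F'(2,3) by blast
qed

lemma continuous_map_indicator_clopen:
  assumes "openin X U" "closedin X U"
  shows "continuous_map X euclideanreal (\<lambda>y. if y \<in> U then 1 else 0)"
proof -
  have "X frontier_of U = {}"
    using assms clopenin_eq_frontier_of[of X U] by blast
  then show ?thesis
    by (intro continuous_map_cases) auto
qed

lemma F_kappa_space_separation_clopen:
  assumes "compact_space S" "F_kappa_space S K"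
    and "openin S P" "openin S Q" "P \<inter> Q = {}" "type_less S K (P \<union> Q)"
  shows "\<exists>B. clopenin S B \<and> P \<subseteq> B \<and> B \<inter> Q = {}"
proof -
  let ?f = "\<lambda>y. if y \<in> Q then 1 else 0 :: real"
  have PQ: "openin S (P \<union> Q)"
    using assms(3,4) by (rule openin_Un)
  have top: "topspace (subtopology S (P \<union> Q)) = P \<union> Q"
    using openin_subset[OF PQ] by auto
  have "openin (subtopology S (P \<union> Q)) Q" "openin (subtopology S (P \<union> Q)) P"
    using assms(3,4) PQ by (simp_all add: openin_open_subtopology)
  moreover have "topspace (subtopology S (P \<union> Q)) - Q = P"
    using top assms(5) by blast
  ultimately have "closedin (subtopology S (P \<union> Q)) Q" "openin (subtopology S (P \<union> Q)) Q"
    unfolding closedin_def top by auto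
  then have "continuous_map (subtopology S (P \<union> Q)) euclideanreal ?f"
    by (rule continuous_map_indicator_clopen[rotated])
  moreover have "bounded (?f ` (P \<union> Q))"
    by (rule finite_imp_bounded) (rule finite_subset[of _ "{0, 1}"], auto)
  moreover have "C_star_embedded S (P \<union> Q)"
    using assms(2,6) PQ unfolding F_kappa_space_def by blast
  ultimately obtain g where g: "continuous_map S euclideanreal g" "\<And>y. y \<in> P \<union> Q \<Longrightarrow> g y = ?f y"
    unfolding C_star_embedded_def by blast
  define Z where "Z c = {y \<in> topspace S. g y = c}" for c
  have "closedin S (Z c)" for c
    using closedin_continuous_map_preimage[OF g(1), of "{c}"] unfolding Z_def by simp
  moreover have "Z 0 \<inter> Z 1 = {}"
    unfolding Z_def by auto
  moreover have "zero_dim S"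
    using assms(2) unfolding F_kappa_space_def by blast
  ultimately obtain B where B: "clopenin S B" "Z 0 \<subseteq> B" "B \<inter> Z 1 = {}"
    using compact_zero_dim_separation_clopen[OF assms(1)] by blast
  have "P \<subseteq> Z 0" "Q \<subseteq> Z 1"
    using g(2) openin_subset[OF PQ] assms(5) unfolding Z_def by auto
  with B show ?thesis
    by blast
qed

lemma type_less_UN:
  assumes "\<And>j. j \<in> D \<Longrightarrow> clopenin S (C j)" "|D| <o |K|"
  shows "type_less S K (\<Union>j\<in>D. C j)"
proof -
  have "|C ` D| <o |K|"
    using ordLeq_ordLess_trans[OF card_of_image assms(2)] .
  then show ?thesis
    using assms(1) unfolding type_less_def by blast
qed

lemma type_less_Un:
  assumes "infinite K" "type_less S K U" "type_less S K U'"
  shows "type_less S K (U \<union> U')"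
proof -
  obtain F F' where "\<forall>C\<in>F \<union> F'. clopenin S C" "\<Union>F = U" "\<Union>F' = U'" "|F| <o |K|" "|F'| <o |K|"
    using assms(2,3) unfolding type_less_def by (metis Un_iff)
  moreover have "|F \<union> F'| <o |K|"
    using card_of_Un_ordLess_infinite assms(1) calculation by blast
  ultimately show ?thesis
    unfolding type_less_def by (intro exI[of _ "F \<union> F'"]) auto
qed

lemma type_less_imp_openin: "type_less S K U \<Longrightarrow> openin S U"
  unfolding type_less_def clopenin_def by (auto intro: openin_Union)

lemma type_less_subtopology_Int_clopen:
  assumes "type_less (subtopology S Y) K V" "clopenin S M" "M \<subseteq> Y"
  shows "type_less S K (V \<inter> M)"
proof -
  obtain F where F: "\<And>C. C \<in> F \<Longrightarrow> clopenin (subtopology S Y) C" "\<Union>F = V" "|F| <o |K|"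
    using assms(1) unfolding type_less_def by blast
  then have "V \<inter> M = (\<Union>C\<in>F. C \<inter> M)"
    by blast
  also have "type_less S K \<dots>"
    by (rule type_less_UN[OF clopenin_Int_subtopology[OF F(1) assms(2,3)] F(3)])
  finally show ?thesis .
qed

lemma is_baseE:
  assumes "is_base S B" "openin S U" "y \<in> U"
  obtains b where "b \<in> B" "y \<in> b" "b \<subseteq> U"
proof -
  obtain C where "C \<subseteq> B" "\<Union>C = U"
    using assms(1,2) unfolding is_base_def by meson
  then show ?thesis
    using that assms(3) by blast
qed

lemma zero_dim_openin_UN_clopen:
  assumes "zero_dim S" "has_weight S K" "openin S U"
  obtains M where "\<And>k. clopenin S (M k)" "\<And>k. M k \<subseteq> U" "(\<Union>k\<in>K. M k) = U"
proof -
  obtain B0 where B0: "is_base S B0" "\<And>b. b \<in> B0 \<Longrightarrow> clopenin S b"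
    using assms(1) unfolding zero_dim_def by blast
  obtain B h where B: "is_base S B" "bij_betw h K B"
    using assms(2) card_of_ordIso ordIso_symmetric unfolding has_weight_def by blast
  \<comment> \<open>\<open>M k\<close> lies between the basic set \<open>h k\<close> and \<open>U\<close> whenever some clopen set does, else it is empty.\<close>
  have "\<forall>k. \<exists>C. clopenin S C \<and> C \<subseteq> U \<and> (\<forall>C'. clopenin S C' \<and> h k \<subseteq> C' \<and> C' \<subseteq> U \<longrightarrow> h k \<subseteq> C)"
  proof
    fix k
    show "\<exists>C. clopenin S C \<and> C \<subseteq> U \<and> (\<forall>C'. clopenin S C' \<and> h k \<subseteq> C' \<and> C' \<subseteq> U \<longrightarrow> h k \<subseteq> C)"
    proof (cases "\<exists>C'. clopenin S C' \<and> h k \<subseteq> C' \<and> C' \<subseteq> U")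
      case False
      then show ?thesis
        by (intro exI[of _ "{}"]) (auto simp: clopenin_def)
    qed blast
  qed
  then obtain M where "\<forall>k. clopenin S (M k) \<and> M k \<subseteq> U \<and>
      (\<forall>C'. clopenin S C' \<and> h k \<subseteq> C' \<and> C' \<subseteq> U \<longrightarrow> h k \<subseteq> M k)"
    by (metis choice)
  then have M: "\<And>k. clopenin S (M k)" "\<And>k. M k \<subseteq> U"
      "\<And>k C. clopenin S C \<Longrightarrow> h k \<subseteq> C \<Longrightarrow> C \<subseteq> U \<Longrightarrow> h k \<subseteq> M k"
    by blast+
  have "U \<subseteq> (\<Union>k\<in>K. M k)"
  proof
    fix y assume "y \<in> U"
    then obtain c where c: "c \<in> B0" "y \<in> c" "c \<subseteq> U"
      using is_baseE[OF B0(1) assms(3)] by blast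
    moreover have "openin S c"
      using B0(2)[OF c(1)] unfolding clopenin_def by blast
    ultimately obtain b where b: "b \<in> B" "y \<in> b" "b \<subseteq> c"
      using is_baseE[OF B(1)] by blast
    then obtain k where "k \<in> K" "h k = b"
      using B(2) unfolding bij_betw_def by blast
    then show "y \<in> (\<Union>k\<in>K. M k)"
      using M(3)[OF B0(2)[OF c(1)]] b c by blast
  qed
  then show ?thesis
    using that M(1,2) by blast
qed

definition partial_separator ::
    "'a topology \<Rightarrow> ('k \<Rightarrow> 'a set) \<Rightarrow> 'a set \<Rightarrow> 'a set \<Rightarrow> 'k set \<Rightarrow> 'a set \<Rightarrow> bool" where
  "partial_separator S M V W D A \<longleftrightarrow>
     A \<subseteq> (\<Union>j\<in>D. M j) \<and> (\<forall>j\<in>D. clopenin S (A \<inter> M j)) \<and> V \<inter> (\<Union>j\<in>D. M j) \<subseteq> A \<and> W \<inter> A = {}"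

definition separator_le :: "('k \<Rightarrow> 'a set) \<Rightarrow> 'k set \<times> 'a set \<Rightarrow> 'k set \<times> 'a set \<Rightarrow> bool" where
  "separator_le M p q \<longleftrightarrow> fst p \<subseteq> fst q \<and> snd p = snd q \<inter> (\<Union>j\<in>fst p. M j)"

lemma partial_order_on_separator_le:
  assumes "\<And>p. p \<in> \<Sigma> \<Longrightarrow> snd p \<subseteq> (\<Union>j\<in>fst p. M j)"
  shows "partial_order_on \<Sigma> (relation_of (separator_le M) \<Sigma>)"
proof (rule partial_order_on_relation_ofI)
  show "separator_le M p p" if "p \<in> \<Sigma>" for p
    using assms[OF that] unfolding separator_le_def by blast
next
  fix p q u assume pq: "separator_le M p q" and "separator_le M q u"
  moreover have "(\<Union>j\<in>fst p. M j) \<subseteq> (\<Union>j\<in>fst q. M j)"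
    using pq unfolding separator_le_def by blast
  ultimately show "separator_le M p u"
    unfolding separator_le_def by blast
next
  fix p q assume "q \<in> \<Sigma>" and pq: "separator_le M p q" and "separator_le M q p"
  then have "fst p = fst q" "snd q \<subseteq> (\<Union>j\<in>fst p. M j)"
    using assms unfolding separator_le_def by auto
  with pq show "p = q"
    unfolding separator_le_def by (simp add: prod_eq_iff Int_absorb2)
qed

lemma partial_separator_extend:
  assumes "compact_space S" "F_kappa_space S K" "infinite K"
    and "\<And>j. clopenin S (M j)" "V \<inter> W = {}"
    and "type_less S K (V \<inter> M k)" "type_less S K (W \<inter> M k)"
    and "partial_separator S M V W D A" "|D| <o |K|"
  shows "\<exists>A'. partial_separator S M V W (insert k D) A' \<and> separator_le M (D, A) (insert k D, A')"
proof -
  let ?U = "\<Union>j\<in>D. M j"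
  have A: "A \<subseteq> ?U" "\<And>j. j \<in> D \<Longrightarrow> clopenin S (A \<inter> M j)" "V \<inter> ?U \<subseteq> A" "W \<inter> A = {}"
    using assms(8) unfolding partial_separator_def by auto
  have "A = (\<Union>j\<in>D. A \<inter> M j)"
    using A(1) by blast
  also have "type_less S K \<dots>"
    using type_less_UN[OF A(2) assms(9)] .
  finally have tA: "type_less S K A" .
  have "?U - A = (\<Union>j\<in>D. M j - A \<inter> M j)"
    by blast
  also have "type_less S K \<dots>"
    using type_less_UN[OF clopenin_diff[OF assms(4) A(2)] assms(9)] .
  finally have tUA: "type_less S K (?U - A)" .
  define P where "P = A \<union> V \<inter> M k"
  define Q where "Q = (?U - A) \<union> W \<inter> M k"
  have tP: "type_less S K P" and tQ: "type_less S K Q"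
    unfolding P_def Q_def using type_less_Un assms(3,6,7) tA tUA by blast+
  have "P \<inter> Q = {}"
    unfolding P_def Q_def using A(3,4) assms(5) by blast
  then obtain B where B: "clopenin S B" "P \<subseteq> B" "B \<inter> Q = {}"
    using F_kappa_space_separation_clopen[OF assms(1,2) type_less_imp_openin[OF tP]
        type_less_imp_openin[OF tQ]] type_less_Un[OF assms(3) tP tQ] by blast
  define A' where "A' = A \<union> B \<inter> M k"
  have restrict: "A' \<inter> ?U = A"
    using A(1) B(2,3) unfolding A'_def P_def Q_def by blast
  have "A' \<inter> M k = B \<inter> M k"
    using B(2) unfolding A'_def P_def by blast
  then have "clopenin S (A' \<inter> M j)" if "j \<in> insert k D" for j
  proof (cases "j = k")
    case False
    then have "A' \<inter> M j = A \<inter> M j"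
      using restrict that by blast
    then show ?thesis
      using A(2) False that by simp
  qed (simp add: clopenin_Int B(1) assms(4))
  moreover have "A' \<subseteq> (\<Union>j\<in>insert k D. M j)" "V \<inter> (\<Union>j\<in>insert k D. M j) \<subseteq> A'" "W \<inter> A' = {}"
    using A(1,3,4) B(2,3) unfolding A'_def P_def Q_def by auto
  ultimately show ?thesis
    using restrict unfolding partial_separator_def separator_le_def by auto
qed

lemma partial_separator_chain_Union:
  fixes C :: "('k set \<times> 'a set) set"
  assumes sep: "\<And>p. p \<in> C \<Longrightarrow> partial_separator S M V W (fst p) (snd p)"
    and chain: "\<And>p q. p \<in> C \<Longrightarrow> q \<in> C \<Longrightarrow> separator_le M p q \<or> separator_le M q p"
  shows partial_separator_chain_Union_sep: "partial_separator S M V W (\<Union>(fst ` C)) (\<Union>(snd ` C))"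
    and separator_le_chain_Union: "\<And>p. p \<in> C \<Longrightarrow> separator_le M p (\<Union>(fst ` C), \<Union>(snd ` C))"
proof -
  have sub: "snd p \<subseteq> (\<Union>j\<in>fst p. M j)" if "p \<in> C" for p
    using sep[OF that] unfolding partial_separator_def by blast
  have restrict: "\<Union>(snd ` C) \<inter> (\<Union>j\<in>fst p. M j) = snd p" if p: "p \<in> C" for p
  proof
    show "\<Union>(snd ` C) \<inter> (\<Union>j\<in>fst p. M j) \<subseteq> snd p"
    proof
      fix a assume a: "a \<in> \<Union>(snd ` C) \<inter> (\<Union>j\<in>fst p. M j)"
      then obtain q where "q \<in> C" "a \<in> snd q"
        by blast
      then show "a \<in> snd p"
        using chain[OF p] a unfolding separator_le_def by blast
    qed
    show "snd p \<subseteq> \<Union>(snd ` C) \<inter> (\<Union>j\<in>fst p. M j)"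
      using sub[OF p] p by blast
  qed
  have "clopenin S (\<Union>(snd ` C) \<inter> M j)" if j: "j \<in> \<Union>(fst ` C)" for j
  proof -
    obtain p where p: "p \<in> C" "j \<in> fst p"
      using j by blast
    then have "\<Union>(snd ` C) \<inter> M j = snd p \<inter> M j"
      using restrict[OF p(1)] by blast
    then show ?thesis
      using sep[OF p(1)] p(2) unfolding partial_separator_def by simp
  qed
  moreover have "\<Union>(snd ` C) \<subseteq> (\<Union>j\<in>\<Union>(fst ` C). M j)"
    using sub by blast
  moreover have "V \<inter> (\<Union>j\<in>\<Union>(fst ` C). M j) \<subseteq> \<Union>(snd ` C)"
  proof
    fix v assume "v \<in> V \<inter> (\<Union>j\<in>\<Union>(fst ` C). M j)"
    then obtain p where "p \<in> C" "v \<in> V \<inter> (\<Union>j\<in>fst p. M j)"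
      by blast
    then show "v \<in> \<Union>(snd ` C)"
      using sep unfolding partial_separator_def by blast
  qed
  moreover have "W \<inter> \<Union>(snd ` C) = {}"
    using sep unfolding partial_separator_def by blast
  ultimately show "partial_separator S M V W (\<Union>(fst ` C)) (\<Union>(snd ` C))"
    unfolding partial_separator_def by blast
  show "separator_le M p (\<Union>(fst ` C), \<Union>(snd ` C))" if "p \<in> C" for p
    using restrict[OF that] that unfolding separator_le_def by auto
qed

lemma partial_separator_exists:
  assumes extend: "\<And>D A k. |D| <o |K| \<Longrightarrow> k \<in> K \<Longrightarrow> partial_separator S M V W D A \<Longrightarrow>
      \<exists>A'. partial_separator S M V W (insert k D) A' \<and> separator_le M (D, A) (insert k D, A')"
  shows "\<exists>A. partial_separator S M V W K A"
proof -
  define r where "r = |K|"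
  have wo: "wo_rel r"
    unfolding r_def wo_rel_def by (rule card_of_Well_order)
  have Fr: "Field r = K"
    unfolding r_def by (rule Field_card_of)
  have cr: "Card_order r"
    unfolding r_def by (rule card_of_Card_order)
  \<comment> \<open>Stages are indexed by initial segments of the cardinal order on \<open>K\<close>, so every proper
    stage uses fewer than \<open>|K|\<close> indices.\<close>
  define \<Sigma> where "\<Sigma> = {p. wo_rel.ofilter r (fst p) \<and> partial_separator S M V W (fst p) (snd p)}"
  have sep: "partial_separator S M V W (fst p) (snd p)" if "p \<in> \<Sigma>" for p
    using that unfolding \<Sigma>_def by blast
  then have "partial_order_on \<Sigma> (relation_of (separator_le M) \<Sigma>)"
    by (intro partial_order_on_separator_le) (auto simp: partial_separator_def)
  moreover have "\<exists>u\<in>\<Sigma>. \<forall>p\<in>C. separator_le M p u" if "C \<in> Chains (relation_of (separator_le M) \<Sigma>)" for C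
  proof -
    have C: "C \<subseteq> \<Sigma>"
      and chain: "\<And>p q. p \<in> C \<Longrightarrow> q \<in> C \<Longrightarrow> separator_le M p q \<or> separator_le M q p"
      using that unfolding Chains_def relation_of_def by auto
    have sepC: "\<And>p. p \<in> C \<Longrightarrow> partial_separator S M V W (fst p) (snd p)"
      using sep C by blast
    have "wo_rel.ofilter r (\<Union>(fst ` C))"
      by (rule wo_rel.ofilter_UNION[OF wo]) (use C in \<open>auto simp: \<Sigma>_def\<close>)
    then have "(\<Union>(fst ` C), \<Union>(snd ` C)) \<in> \<Sigma>"
      using partial_separator_chain_Union_sep[OF sepC chain] unfolding \<Sigma>_def by simp
    then show ?thesis
      using separator_le_chain_Union[OF sepC chain] by blast
  qed
  ultimately obtain m where m: "m \<in> \<Sigma>" "\<And>q. q \<in> \<Sigma> \<Longrightarrow> separator_le M m q \<Longrightarrow> q = m"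
    using predicate_Zorn[of \<Sigma> "separator_le M"] by blast
  obtain D A where DA: "m = (D, A)"
    by fastforce
  have "D = K"
  proof (rule ccontr)
    assume "D \<noteq> K"
    then obtain k where k: "k \<in> K" "D = underS r k"
      using wo_rel.ofilter_underS_Field[OF wo] m(1) Fr unfolding \<Sigma>_def DA by auto
    then have "|D| <o |K|"
      using card_of_underS[OF cr] Fr unfolding r_def by blast
    moreover have "partial_separator S M V W D A"
      using sep[OF m(1)] DA by simp
    ultimately obtain A' where A': "partial_separator S M V W (insert k D) A'"
        "separator_le M m (insert k D, A')"
      using extend k(1) DA by blast
    have "insert k D = under r k"
      using Refl_under_underS[OF wo_rel.REFL[OF wo]] k Fr by auto
    then have "(insert k D, A') \<in> \<Sigma>"
      using A'(1) wo_rel.under_ofilter[OF wo] unfolding \<Sigma>_def by simp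
    with A'(2) have "insert k D = D"
      using m(2) DA by blast
    then show False
      using k underS_notIn by fastforce
  qed
  then show ?thesis
    using m(1) unfolding \<Sigma>_def DA by auto
qed

theorem lemma6p7:
  fixes K :: "'k set" and S :: "'a topology"
  assumes "infinite K"
    and "kappa_eq_kappa_less_kappa K"
    and "kappa_Parovicenko S K"
    and "has_weight S K"
    and "x \<in> topspace S"
    and "X = subtopology S (topspace S - {x})"
    and "openin X V" and "openin X W" and "V \<inter> W = {}"
    and "type_less X K V" and "type_less X K W"
  shows "\<exists>A. clopenin X A \<and> V \<subseteq> A \<and> W \<inter> A = {}"
proof -
  have S: "compact_space S" "F_kappa_space S K" "Hausdorff_space S"
    using assms(3) unfolding kappa_Parovicenko_def by blast+
  define Y where "Y = topspace S - {x}"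
  have Y: "openin S Y"
    using closedin_t1_singleton[OF Hausdorff_imp_t1_space[OF S(3)] assms(5)]
    unfolding Y_def closedin_def by blast
  have X: "X = subtopology S Y"
    using assms(6) Y_def by simp
  have "zero_dim S"
    using S(2) unfolding F_kappa_space_def by blast
  then obtain M where M: "\<And>k. clopenin S (M k)" "\<And>k. M k \<subseteq> Y" "(\<Union>k\<in>K. M k) = Y"
    using zero_dim_openin_UN_clopen[OF _ assms(4) Y] by metis
  have "\<exists>A. partial_separator S M V W K A"
  proof (rule partial_separator_exists)
    fix D A k
    assume "|D| <o |K|" "partial_separator S M V W D A"
    then show "\<exists>A'. partial_separator S M V W (insert k D) A' \<and> separator_le M (D, A) (insert k D, A')"
      using partial_separator_extend[where M = M, OF S(1,2) assms(1) M(1) assms(9)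
          type_less_subtopology_Int_clopen[OF assms(10)[unfolded X] M(1,2)]
          type_less_subtopology_Int_clopen[OF assms(11)[unfolded X] M(1,2)]] by blast
  qed
  then obtain A where A: "A \<subseteq> Y" "\<And>k. k \<in> K \<Longrightarrow> clopenin S (A \<inter> M k)" "V \<inter> Y \<subseteq> A" "W \<inter> A = {}"
    unfolding partial_separator_def M(3) by blast
  have "clopenin X A"
    unfolding X by (rule clopenin_subtopology_from_cover[OF Y M(3) M(1) A(1,2)])
  moreover have "V \<subseteq> Y"
    using openin_subset[OF assms(7)] X by simp
  ultimately show ?thesis
    using A(3,4) by blast
qed

end
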